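(* Let $z\in\mathcal{M}$, and let $X_z$ be obtained from $\Lambda_z$ by filling in the bounded complementary components, so that $X_z$ is the smallest cell-like set containing $\Lambda_z$. Then $X_z$ is convex if and only if $z=re^{\pi ip/q}$ for coprime integers $p,q$ and real $r$ with $r\ge2^{-1/q}$, in which case $X_z=\Lambda_z$ is a convex polygon.
   Context: For $z\in\mathbb{D}^*=\{0<|z|<1\}$, $f(x)=zx$, $g(x)=z(x-1)+1$, $\Lambda_z$ is the unique nonempty compact subset of $\mathbb{C}$ with $\Lambda_z=f(\Lambda_z)\cup g(\Lambda_z)$, and $\mathcal{M}=\{z\in\mathbb{D}^*:\Lambda_z\text{ connected}\}$. A compact connected set $X\subseteq\mathbb{C}$ is cell-like if $\mathbb{C}\setminus X$ is connected. *)

theory Defs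
  imports "HOL-Analysis.Analysis"
begin

definition fmap :: "complex \<Rightarrow> complex \<Rightarrow> complex" where
  "fmap z x = z * x"

definition gmap :: "complex \<Rightarrow> complex \<Rightarrow> complex" where
  "gmap z x = z * (x - 1) + 1"

definition Lambda :: "complex \<Rightarrow> complex set" where
  "Lambda z = (THE L. compact L \<and> L \<noteq> {} \<and> L = fmap z ` L \<union> gmap z ` L)"

definition Mset :: "complex set" where
  "Mset = {z. 0 < cmod z \<and> cmod z < 1 \<and> connected (Lambda z)}"

definition filled :: "complex set \<Rightarrow> complex set" where
  "filled K = K \<union> \<Union>{C. C \<in> components (- K) \<and> bounded C}"

end

theory Submission
  imports Defs
begin

text \<open>
  If \<open>X = filled (Lambda z)\<close> is convex, then \<open>X\<close> is the convex hull of \<open>Lambda z\<close> and its frontier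
  lies in \<open>Lambda z\<close>; a ray argument then gives \<open>X = z X \<union> (c + z X)\<close> with \<open>c = 1 - z\<close>. As this
  union is convex, the face of \<open>z X\<close> whose normal is perpendicular to \<open>c\<close> has width at least
  \<open>cmod c\<close>. On the other hand, a face of \<open>X\<close> lies in \<open>z\<close> times a rotated face of \<open>X\<close>, up to a
  translation by \<open>c\<close> that changes the width only when \<open>c\<close> is parallel to the face. Iterating,
  the width is at most \<open>cmod c\<close> times the sum of \<open>cmod z\<^sup>k\<close> over the \<open>k \<ge> 1\<close> with \<open>(sgn z)\<^sup>k\<close> real.
  If \<open>q\<close> is the least such exponent, this sum is at most \<open>cmod z\<^sup>q / (1 - cmod z\<^sup>q)\<close>, so
  \<open>cmod z\<^sup>q \<ge> 1/2\<close>, which is the rational-angle condition.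

  Conversely, if \<open>z\<^sup>q = w\<close> is real with \<open>\<bar>w\<bar> \<ge> 1/2\<close>, some interval \<open>I\<close> satisfies
  \<open>I = w I \<union> (w I + 1)\<close>, and the zonogon \<open>\<Sum>\<^sub>m\<^sub><\<^sub>q (1 - z) z\<^sup>m I\<close> is a compact fixed point of the
  Hutchinson operator, hence equal to \<open>Lambda z\<close>.
\<close>

section \<open>The attractor\<close>

definition hutchinson :: "complex \<Rightarrow> complex set \<Rightarrow> complex set" where
  "hutchinson z S = fmap z ` S \<union> gmap z ` S"

lemma hutchinson_mono: "S \<subseteq> T \<Longrightarrow> hutchinson z S \<subseteq> hutchinson z T"
  unfolding hutchinson_def by blast

lemma dist_fmap: "dist (fmap z x) (fmap z y) = cmod z * dist x y"
  by (simp add: fmap_def dist_norm norm_mult flip: right_diff_distrib)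

lemma dist_gmap: "dist (gmap z x) (gmap z y) = cmod z * dist x y"
  by (simp add: gmap_def dist_norm norm_mult flip: right_diff_distrib)

lemma infdist_image_le:
  fixes h :: "'a::heine_borel \<Rightarrow> 'a"
  assumes lip: "\<And>x y. dist (h x) (h y) \<le> c * dist x y" and "c \<ge> 0"
    and L: "closed L" "L \<noteq> {}" "h ` L \<subseteq> L"
  shows "infdist (h y) L \<le> c * infdist y L"
proof -
  obtain w where w: "w \<in> L" "infdist y L = dist y w"
    using infdist_attains_inf[OF L(1,2)] by blast
  have "infdist (h y) L \<le> dist (h y) (h w)"
    using w(1) L(3) by (intro infdist_le) blast
  also have "\<dots> \<le> c * infdist y L"
    using lip w(2) by simp
  finally show ?thesis .
qed

text \<open>The distance to \<open>L\<close> attains its maximum on \<open>K\<close> at a point \<open>fmap z y\<close> or \<open>gmap z y\<close> with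
  \<open>y \<in> K\<close>; both maps shrink the distance to \<open>L\<close> by the factor \<open>cmod z < 1\<close>, so the maximum is \<open>0\<close>.\<close>
lemma hutchinson_contraction_subset:
  assumes z: "cmod z < 1"
    and K: "compact K" "K \<subseteq> hutchinson z K"
    and L: "closed L" "L \<noteq> {}" "hutchinson z L \<subseteq> L"
  shows "K \<subseteq> L"
proof (cases "K = {}")
  case False
  have cont: "continuous_on K (\<lambda>x. infdist x L)"
    by (intro continuous_intros)
  obtain x0 where x0: "x0 \<in> K" "\<And>x. x \<in> K \<Longrightarrow> infdist x L \<le> infdist x0 L"
    using continuous_attains_sup[OF K(1) False cont] by auto
  obtain y0 where y0: "y0 \<in> K" "x0 = fmap z y0 \<or> x0 = gmap z y0"
    using x0(1) K(2) unfolding hutchinson_def by blast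
  have "infdist x0 L \<le> cmod z * infdist y0 L"
    using y0(2) L unfolding hutchinson_def
    by (metis (no_types, lifting) Un_subset_iff infdist_image_le dist_fmap dist_gmap norm_ge_zero order_refl)
  also have "\<dots> \<le> cmod z * infdist x0 L"
    using x0(2)[OF y0(1)] by (simp add: mult_left_mono)
  finally have "infdist x0 L = 0"
    using z infdist_nonneg[of x0 L] by (smt (verit) mult_le_cancel_right1)
  hence "infdist x L = 0" if "x \<in> K" for x
    using x0(2)[OF that] infdist_nonneg[of x L] by linarith
  thus ?thesis
    using in_closed_iff_infdist_zero[OF L(1,2)] by blast
qed simp

lemma Inter_decseq_Un:
  fixes A B :: "nat \<Rightarrow> 'a set"
  assumes "decseq A" "decseq B"
  shows "(\<Inter>n. A n \<union> B n) = (\<Inter>n. A n) \<union> (\<Inter>n. B n)"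
proof
  show "(\<Inter>n. A n \<union> B n) \<subseteq> (\<Inter>n. A n) \<union> (\<Inter>n. B n)"
  proof
    fix x assume x: "x \<in> (\<Inter>n. A n \<union> B n)"
    show "x \<in> (\<Inter>n. A n) \<union> (\<Inter>n. B n)"
    proof (cases "x \<in> (\<Inter>n. A n)")
      case False
      then obtain m where m: "x \<notin> A m" by blast
      have "x \<in> B n" for n
        using x m assms decseqD[of A m "max m n"] decseqD[of B n "max m n"] by auto
      thus ?thesis by blast
    qed blast
  qed
qed blast

lemma hutchinson_invariant_cball:
  assumes "cmod z < 1"
  shows "hutchinson z (cball 0 (2 / (1 - cmod z))) \<subseteq> cball 0 (2 / (1 - cmod z))"
proof -
  define R where "R = 2 / (1 - cmod z)"
  have "R * (1 - cmod z) = 2"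
    using assms by (simp add: R_def divide_simps)
  hence R: "cmod z * (R + 1) + 1 \<le> R"
    using assms by (simp add: algebra_simps)
  have R0: "0 \<le> R"
    using assms by (simp add: R_def)
  have "norm (fmap z y) \<le> R" "norm (gmap z y) \<le> R" if "norm y \<le> R" for y
  proof -
    have "norm (fmap z y) = cmod z * norm y"
      by (simp add: fmap_def norm_mult)
    also have "\<dots> \<le> R"
      using that assms R0 by (smt (verit) mult_left_le_one_le norm_ge_zero)
    finally show "norm (fmap z y) \<le> R" .
    have "norm (gmap z y) \<le> cmod z * norm (y - 1) + 1"
      unfolding gmap_def by (metis norm_mult norm_one norm_triangle_ineq)
    also have "\<dots> \<le> cmod z * (R + 1) + 1"
      using that norm_triangle_ineq4[of y 1] by (intro add_mono mult_left_mono) auto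
    finally show "norm (gmap z y) \<le> R"
      using R by simp
  qed
  thus ?thesis
    unfolding hutchinson_def R_def[symmetric] by auto
qed

text \<open>The attractor is the intersection of the iterates of an invariant ball.\<close>
lemma hutchinson_fixpoint_exists:
  assumes z0: "z \<noteq> 0" and z: "cmod z < 1"
  obtains L where "compact L" "L \<noteq> {}" "hutchinson z L = L"
proof -
  define B where "B = cball (0::complex) (2 / (1 - cmod z))"
  define S where "S n = (hutchinson z ^^ n) B" for n
  have S_Suc: "S (Suc n) = hutchinson z (S n)" for n
    by (simp add: S_def)
  have "S (Suc n) \<subseteq> S n" for n
  proof (induction n)
    case 0
    show ?case using hutchinson_invariant_cball[OF z] by (simp add: S_def B_def)
  next
    case (Suc n)
    thus ?case by (simp add: S_Suc hutchinson_mono)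
  qed
  hence dec: "decseq S"
    by (simp add: decseq_Suc_iff)
  have cont: "continuous_on A (fmap z)" "continuous_on A (gmap z)" for A
    unfolding fmap_def gmap_def by (intro continuous_intros)+
  have S: "compact (S n)" "S n \<noteq> {}" for n
    using z by (induction n) (auto simp: S_Suc B_def S_def hutchinson_def intro!: compact_continuous_image cont)
  have inj: "inj (fmap z)" "inj (gmap z)"
    using z0 by (auto simp: inj_def fmap_def gmap_def)
  define L where "L = (\<Inter>n. S n)"
  have "hutchinson z L = (\<Inter>n. fmap z ` S n) \<union> (\<Inter>n. gmap z ` S n)"
    unfolding hutchinson_def L_def using inj
    by (simp add: image_INT[of _ UNIV] inj_on_subset)
  also have "\<dots> = (\<Inter>n. fmap z ` S n \<union> gmap z ` S n)"
    using dec by (intro Inter_decseq_Un[symmetric]) (auto simp: decseq_def image_mono)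
  also have "\<dots> = (\<Inter>n. S (Suc n))"
    by (simp add: S_Suc hutchinson_def)
  also have "\<dots> = L"
    using dec unfolding L_def decseq_Suc_iff by blast
  finally have "hutchinson z L = L" .
  moreover have "compact L"
    unfolding L_def using S by (auto intro: compact_Inter)
  moreover have "L \<noteq> {}"
    unfolding L_def using S dec by (intro compact_nest) (auto simp: decseq_def)
  ultimately show ?thesis using that by blast
qed

lemma Lambda_attractor:
  assumes "z \<noteq> 0" "cmod z < 1"
  shows "compact (Lambda z)" "Lambda z \<noteq> {}" "hutchinson z (Lambda z) = Lambda z"
proof -
  have "\<exists>!L. compact L \<and> L \<noteq> {} \<and> L = fmap z ` L \<union> gmap z ` L"
    using hutchinson_fixpoint_exists[OF assms]
      hutchinson_contraction_subset[OF assms(2) _ _ compact_imp_closed]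
    unfolding hutchinson_def by (metis subset_antisym order_refl)
  from theI'[OF this] show "compact (Lambda z)" "Lambda z \<noteq> {}" "hutchinson z (Lambda z) = Lambda z"
    unfolding Lambda_def hutchinson_def by auto
qed

lemma Lambda_unique:
  assumes "z \<noteq> 0" "cmod z < 1" "compact L" "L \<noteq> {}" "hutchinson z L = L"
  shows "Lambda z = L"
  using Lambda_attractor[OF assms(1,2)] assms
    hutchinson_contraction_subset[OF assms(2) _ _ compact_imp_closed]
  by (metis subset_antisym order_refl)


section \<open>Filling in the bounded complementary components\<close>

lemma filled_eq_Un_inside: "filled K = K \<union> inside K"
proof -
  have "(\<exists>C\<in>components (- K). bounded C \<and> x \<in> C) \<longleftrightarrow> x \<in> inside K" for x
  proof
    assume "\<exists>C\<in>components (- K). bounded C \<and> x \<in> C"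
    then obtain C where C: "C \<in> components (- K)" "bounded C" "x \<in> C"
      by blast
    hence "C = connected_component_set (- K) x"
      by (metis components_iff connected_component_eq)
    thus "x \<in> inside K"
      using C in_components_subset by (fastforce simp: inside_def)
  next
    assume "x \<in> inside K"
    thus "\<exists>C\<in>components (- K). bounded C \<and> x \<in> C"
      by (intro bexI[of _ "connected_component_set (- K) x"]) (auto simp: inside_def componentsI)
  qed
  thus ?thesis
    unfolding filled_def by blast
qed

lemma filled_convex: "convex K \<Longrightarrow> filled K = K"
  by (simp add: filled_eq_Un_inside inside_convex)

lemma filled_eq_Compl_outside: "filled K = - outside K"
  by (simp add: filled_eq_Un_inside union_with_inside)

lemma frontier_filled_subset: "closed K \<Longrightarrow> frontier (filled K) \<subseteq> K"
  by (simp add: filled_eq_Compl_outside frontier_complement frontier_outside_subset)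

lemma filled_eq_convex_hull:
  assumes "convex (filled K)"
  shows "filled K = convex hull K"
proof
  show "convex hull K \<subseteq> filled K"
    using assms by (intro hull_minimal) (auto simp: filled_def)
  show "filled K \<subseteq> convex hull K"
    using outside_subset_convex[OF convex_convex_hull hull_subset, of K]
    by (auto simp: filled_eq_Compl_outside)
qed


section \<open>Zonogons as attractors\<close>

lemma invariant_interval:
  fixes w :: real
  assumes "1/2 \<le> \<bar>w\<bar>" "\<bar>w\<bar> < 1"
  obtains a b where "a \<le> b" "(\<lambda>y. w * y) ` {a..b} \<union> (\<lambda>y. w * y + 1) ` {a..b} = {a..b}"
proof (cases "w > 0")
  case True
  define b where "b = 1 / (1 - w)"
  have b: "w * b + 1 = b" "1 \<le> w * b" "0 \<le> b"
    using True assms by (auto simp: b_def field_simps)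
  have "(\<lambda>y. w * y) ` {0..b} = {0..w * b}" "(\<lambda>y. w * y + 1) ` {0..b} = {1..b}"
    using True b image_affinity_atLeastAtMost[of w 0 0 b] image_affinity_atLeastAtMost[of w 1 0 b]
    by auto
  hence "(\<lambda>y. w * y) ` {0..b} \<union> (\<lambda>y. w * y + 1) ` {0..b} = {0..b}"
    using b by auto
  thus ?thesis by (rule that[OF b(3)])
next
  case False
  define b where "b = 1 / (1 - w\<^sup>2)"
  have w: "w \<le> -1/2" "-1 < w"
    using False assms by auto
  have "0 < 1 - w\<^sup>2"
    using assms by (simp add: abs_square_less_1)
  hence b1: "b * (1 - w\<^sup>2) = 1" and b0: "0 < b"
    by (simp_all add: b_def)
  have "0 \<le> (2 * w + 1) * (w - 1)"
    using w by (intro mult_nonpos_nonpos) auto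
  hence "b * (1 - w\<^sup>2) \<le> b * (w\<^sup>2 - w)"
    using b0 by (intro mult_left_mono) (auto simp: power2_eq_square algebra_simps)
  hence b: "w * (w * b) + 1 = b" "w * b + 1 \<le> w * (w * b)" "w * b \<le> b"
    using b1 b0 w by (auto simp: power2_eq_square algebra_simps)
  have "(\<lambda>y. w * y) ` {w * b..b} = {w * b..w * (w * b)}"
    "(\<lambda>y. w * y + 1) ` {w * b..b} = {w * b + 1..b}"
    using w b image_affinity_atLeastAtMost[of w 0 "w * b" b] image_affinity_atLeastAtMost[of w 1 "w * b" b]
    by auto
  hence "(\<lambda>y. w * y) ` {w * b..b} \<union> (\<lambda>y. w * y + 1) ` {w * b..b} = {w * b..b}"
    using b by auto
  thus ?thesis by (rule that[OF b(3)])
qed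

lemma elt_set_times_image: "a *o B = (\<lambda>x. a * x) ` B"
  by (auto simp: elt_set_times_def)

lemma elt_set_plus_image: "a +o B = (\<lambda>x. a + x) ` B"
  by (auto simp: elt_set_plus_def)

lemma hutchinson_eq: "hutchinson z S = z *o S \<union> (1 - z) +o z *o S"
  by (auto simp: hutchinson_def fmap_def gmap_def elt_set_times_image elt_set_plus_image
      image_image algebra_simps)

lemma elt_set_times_sum:
  fixes a :: "'a::semiring_0"
  shows "a *o sum S A = (\<Sum>i\<in>A. a *o S i)"
proof -
  have "(\<lambda>B. a *o B) (sum S A) = sum ((\<lambda>B. a *o B) \<circ> S) A"
    by (rule sum_set_linear) (simp add: set_times_plus_distrib2, simp add: elt_set_times_def)
  thus ?thesis by (simp add: o_def)
qed

text \<open>With \<open>c = 1 - z\<close>, the set \<open>P = c I + c z I + \<dots> + c z\<^sup>n\<^sup>-\<^sup>1 I\<close> satisfies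
  \<open>z P = c z I + \<dots> + c z\<^sup>n I\<close>, so \<open>z P \<union> (c + z P)\<close> replaces the summand \<open>c z\<^sup>n I\<close> by
  \<open>c (z\<^sup>n I \<union> (1 + z\<^sup>n I)) = c I\<close>.\<close>
lemma hutchinson_segment_sum:
  fixes z :: complex and I :: "complex set"
  assumes I: "(z ^ n) *o I \<union> 1 +o (z ^ n) *o I = I" and "n > 0"
  shows "hutchinson z (\<Sum>m<n. ((1 - z) * z ^ m) *o I) = (\<Sum>m<n. ((1 - z) * z ^ m) *o I)"
proof -
  define T where "T m = ((1 - z) * z ^ m) *o I" for m
  obtain k where n: "n = Suc k" using \<open>n > 0\<close> gr0_implies_Suc by blast
  define R where "R = (\<Sum>m<k. T (Suc m))"
  have zT: "z *o T m = T (Suc m)" for m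
    by (simp add: T_def set_times_rearrange2 algebra_simps)
  have P: "(\<Sum>m<n. T m) = R + T 0"
    unfolding n R_def sum.lessThan_Suc_shift by (simp add: add.commute)
  have zP: "z *o (\<Sum>m<n. T m) = R + T n"
    unfolding n R_def elt_set_times_sum zT by simp
  have "T n \<union> (1 - z) +o T n = (1 - z) *o ((z ^ n) *o I \<union> 1 +o (z ^ n) *o I)"
    by (auto simp: T_def elt_set_times_image elt_set_plus_image image_Un image_image algebra_simps)
  also have "\<dots> = T 0"
    using I by (simp add: T_def)
  finally have "(R + T n) \<union> (R + (1 - z) +o T n) = R + T 0"
    by (simp only: set_plus_Un[symmetric])
  hence "hutchinson z (\<Sum>m<n. T m) = R + T 0"
    unfolding hutchinson_eq zP by (simp add: set_plus_rearrange4)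
  thus ?thesis
    using P by (simp add: T_def)
qed

lemma convex_hull_sum_set: "convex hull (sum S A) = (\<Sum>i\<in>A. convex hull (S i))"
  using sum_set_linear[of "\<lambda>B. convex hull B" S A]
  by (simp add: convex_hull_set_plus o_def)

lemma finite_sum_set: "(\<And>i. i \<in> A \<Longrightarrow> finite (S i)) \<Longrightarrow> finite (sum S A)"
  by (induction A rule: infinite_finite_induct) (auto intro: finite_set_plus)

lemma sum_set_nonempty: "(\<And>i. i \<in> A \<Longrightarrow> S i \<noteq> {}) \<Longrightarrow> sum S A \<noteq> {}"
  by (induction A rule: infinite_finite_induct) (auto simp: set_plus_def)

lemma convex_hull_elt_set_times:
  fixes a :: complex
  shows "convex hull (a *o S) = a *o (convex hull S)"
  unfolding elt_set_times_image
  using convex_hull_linear_image[OF bounded_linear.linear[OF bounded_linear_mult_right], of a S]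
  by simp

lemma Lambda_polytope_if_power_real:
  assumes z: "z \<noteq> 0" "cmod z < 1" and n: "n > 0" "z ^ n \<in> \<real>" "1/2 \<le> cmod z ^ n"
  shows "convex (Lambda z)" "polytope (Lambda z)"
proof -
  obtain w where zw: "z ^ n = of_real w"
    using n(2) Reals_cases by blast
  have w: "\<bar>w\<bar> = cmod z ^ n"
    by (metis zw norm_of_real norm_power)
  hence "1/2 \<le> \<bar>w\<bar>" "\<bar>w\<bar> < 1"
    using n(1,3) z(2) by (simp_all add: power_less_one_iff)
  then obtain a b where ab: "a \<le> b" "(\<lambda>y. w * y) ` {a..b} \<union> (\<lambda>y. w * y + 1) ` {a..b} = {a..b}"
    using invariant_interval by blast
  define V where "V = (of_real ` {a, b} :: complex set)"
  define J where "J = (of_real ` {a..b} :: complex set)"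
  have "convex hull V = of_real ` (convex hull {a, b})"
    unfolding V_def by (metis convex_hull_linear_image bounded_linear.linear bounded_linear_of_real)
  hence J: "J = convex hull V"
    using ab(1) by (simp add: J_def segment_convex_hull[symmetric] closed_segment_eq_real_ivl)
  have "(z ^ n) *o J \<union> 1 +o (z ^ n) *o J = of_real ` ((\<lambda>y. w * y) ` {a..b} \<union> (\<lambda>y. w * y + 1) ` {a..b})"
    unfolding J_def zw elt_set_times_image elt_set_plus_image image_Un image_image
    by (simp add: add.commute)
  hence inv: "(z ^ n) *o J \<union> 1 +o (z ^ n) *o J = J"
    unfolding ab(2) J_def .
  define P where "P = (\<Sum>m<n. ((1 - z) * z ^ m) *o J)"
  have P: "P = convex hull (\<Sum>m<n. ((1 - z) * z ^ m) *o V)"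
    by (simp add: P_def J convex_hull_sum_set convex_hull_elt_set_times)
  have "polytope P"
    unfolding P by (intro polytope_convex_hull finite_sum_set) (simp add: V_def elt_set_times_image)
  moreover have "P \<noteq> {}"
    unfolding P convex_hull_eq_empty
    by (intro sum_set_nonempty) (simp add: V_def elt_set_times_image)
  moreover have "Lambda z = P"
    using Lambda_unique[OF z polytope_imp_compact[OF \<open>polytope P\<close>] \<open>P \<noteq> {}\<close>]
      hutchinson_segment_sum[OF inv n(1)] by (simp add: P_def)
  ultimately show "convex (Lambda z)" "polytope (Lambda z)"
    using polytope_imp_convex by auto
qed


section \<open>Convex filled attractors are self-similar\<close>

text \<open>A point of \<open>C\<close> outside \<open>A \<union> B\<close> is strictly separated from \<open>A\<close> and from \<open>B\<close> by two lines. In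
  the plane some ray from the point stays in both open half-planes: it runs parallel to the
  first line, in the direction pointing away from \<open>B\<close>. Such a ray leaves the bounded set \<open>C\<close>
  through a frontier point outside \<open>A \<union> B\<close>.\<close>
lemma subset_Un_convex_if_frontier_subset:
  fixes A B C :: "complex set"
  assumes C: "compact C" "frontier C \<subseteq> A \<union> B"
    and A: "compact A" "convex A" "A \<noteq> {}" and B: "compact B" "convex B"
  shows "C \<subseteq> A \<union> B"
proof
  fix x assume xC: "x \<in> C"
  show "x \<in> A \<union> B"
  proof (rule ccontr)
    assume xAB: "x \<notin> A \<union> B"
    obtain a1 b1 where ab1: "inner a1 x < b1" "\<forall>y\<in>A. inner a1 y > b1"
      using separating_hyperplane_closed_point[OF A(2) compact_imp_closed[OF A(1)]] xAB by blast
    obtain a2 b2 where ab2: "inner a2 x < b2" "\<forall>y\<in>B. inner a2 y > b2"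
      using separating_hyperplane_closed_point[OF B(2) compact_imp_closed[OF B(1)]] xAB by blast
    have "a1 \<noteq> 0"
      using ab1 A(3) by auto
    then obtain d where d: "d \<noteq> 0" "inner a1 d = 0" "inner a2 d \<le> 0"
      by (cases "inner a2 (\<i> * a1) \<le> 0")
        (auto intro: that[of "\<i> * a1"] that[of "- \<i> * a1"] simp: inner_complex_def)
    define R where "R = (\<lambda>t. x + t *\<^sub>R d) ` {0..}"
    have "connected R"
      unfolding R_def by (intro connected_continuous_image continuous_intros) simp
    moreover have "R \<inter> C \<noteq> {}"
      using xC unfolding R_def by (auto intro!: image_eqI[of _ _ 0])
    moreover have "R - C \<noteq> {}"
    proof -
      obtain M where M: "\<forall>y\<in>C. norm y \<le> M"
        using compact_imp_bounded[OF C(1)] bounded_iff by blast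
      define t where "t = (\<bar>M\<bar> + norm x + 1) / norm d"
      have "norm (t *\<^sub>R d) = \<bar>M\<bar> + norm x + 1"
        using d by (simp add: t_def)
      hence "\<bar>M\<bar> + 1 \<le> norm (x + t *\<^sub>R d)"
        using norm_diff_ineq[of "t *\<^sub>R d" x] by (simp add: add.commute)
      hence "x + t *\<^sub>R d \<notin> C"
        using M by force
      moreover have "t \<ge> 0"
        by (simp add: t_def)
      ultimately show ?thesis
        unfolding R_def by blast
    qed
    ultimately obtain t where t: "t \<ge> 0" "x + t *\<^sub>R d \<in> frontier C"
      using connected_Int_frontier unfolding R_def by blast
    have "inner a1 (x + t *\<^sub>R d) < b1" "inner a2 (x + t *\<^sub>R d) < b2"
      using ab1(1) ab2(1) d mult_nonneg_nonpos[OF t(1) d(3)] by (auto simp: inner_add_right)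
    thus False
      using t(2) C(2) ab1(2) ab2(2) by force
  qed
qed

lemma hutchinson_convex_hull:
  "hutchinson z (convex hull S) = convex hull (z *o S) \<union> convex hull ((1 - z) +o z *o S)"
  by (simp add: hutchinson_eq convex_hull_elt_set_times elt_set_plus_image convex_hull_translation)

lemma hutchinson_convex_hull_Lambda:
  assumes z: "z \<noteq> 0" "cmod z < 1" and cvx: "convex (filled (Lambda z))"
  shows "hutchinson z (convex hull (Lambda z)) = convex hull (Lambda z)"
proof -
  define L where "L = Lambda z"
  define A where "A = convex hull (z *o L)"
  define B where "B = convex hull ((1 - z) +o z *o L)"
  have L: "compact L" "L \<noteq> {}" "hutchinson z L = L"
    unfolding L_def using Lambda_attractor[OF z] by auto
  have hull: "hutchinson z (convex hull L) = A \<union> B"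
    by (simp add: A_def B_def hutchinson_convex_hull)
  have "compact (z *o L)" "compact ((1 - z) +o z *o L)"
    using L(1) by (auto simp: elt_set_times_image elt_set_plus_image image_image
        intro!: compact_continuous_image continuous_intros)
  hence AB: "compact A" "convex A" "A \<noteq> {}" "compact B" "convex B"
    using L(2) by (auto simp: A_def B_def compact_convex_hull elt_set_times_image)
  have "frontier (convex hull L) \<subseteq> L"
    using frontier_filled_subset[OF compact_imp_closed[OF L(1)]] filled_eq_convex_hull[OF cvx]
    unfolding L_def by simp
  also have "\<dots> \<subseteq> A \<union> B"
    using hutchinson_mono[OF hull_subset[of L convex], of z] L(3) hull by simp
  finally have "frontier (convex hull L) \<subseteq> A \<union> B" .
  hence "convex hull L \<subseteq> A \<union> B"
    using subset_Un_convex_if_frontier_subset[OF compact_convex_hull[OF L(1)] _ AB] by blast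
  moreover have "z *o L \<subseteq> L" "(1 - z) +o z *o L \<subseteq> L"
    using L(3) unfolding hutchinson_eq by blast+
  hence "A \<union> B \<subseteq> convex hull L"
    unfolding A_def B_def by (simp add: hull_mono)
  ultimately show ?thesis
    using hull unfolding L_def by blast
qed

section \<open>Support faces\<close>

text \<open>\<open>Re (x * cnj u)\<close> is the inner product of \<open>x\<close> and \<open>u\<close>, so this is the face of \<open>K\<close> with outer
  normal \<open>u\<close>.\<close>
definition support_face :: "complex set \<Rightarrow> complex \<Rightarrow> complex set" where
  "support_face K u = {x \<in> K. \<forall>y\<in>K. Re (y * cnj u) \<le> Re (x * cnj u)}"

lemma Re_of_real_mult: "Re (of_real r * w) = r * Re w"
  by simp

lemma Re_mult_cnj_rotate: "Re (z * a * cnj v) = cmod z * Re (a * cnj (v * cnj (sgn z)))"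
proof -
  have "z * a * cnj v = of_real (cmod z) * (a * cnj (v * cnj (sgn z)))"
    by (cases "z = 0") (simp_all add: sgn_eq)
  thus ?thesis
    by (simp only: Re_of_real_mult)
qed

lemma mult_cnj_sgn: "c * cnj (sgn c) = of_real (cmod c)"
proof (cases "c = 0")
  case False
  have "c * cnj (sgn c) = c * cnj c / of_real (cmod c)"
    by (simp add: sgn_eq)
  also have "\<dots> = of_real (cmod c)"
    using False by (simp add: complex_norm_square[symmetric] power2_eq_square)
  finally show ?thesis .
qed simp

lemma support_face_hutchinson:
  assumes C: "hutchinson z C = C" and z: "z \<noteq> 0" and x: "x \<in> support_face C v"
  obtains a s where "a \<in> support_face C (v * cnj (sgn z))" "s = 0 \<or> s = 1"
    "x = z * a + of_real s * (1 - z)"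
    "0 < Re ((1 - z) * cnj v) \<Longrightarrow> s = 1" "Re ((1 - z) * cnj v) < 0 \<Longrightarrow> s = 0"
proof -
  define h where "h s a = z * a + of_real s * (1 - z)" for s :: real and a
  have hC: "h s a \<in> C" if "a \<in> C" "s = 0 \<or> s = 1" for s a
  proof -
    have "fmap z a \<in> C" "gmap z a \<in> C"
      using that(1) C unfolding hutchinson_def by blast+
    thus ?thesis
      using that(2) by (auto simp: h_def fmap_def gmap_def algebra_simps)
  qed
  have xmax: "Re (y * cnj v) \<le> Re (x * cnj v)" if "y \<in> C" for y
    using x that by (auto simp: support_face_def)
  have "x \<in> fmap z ` C \<union> gmap z ` C"
    using x C by (auto simp: support_face_def hutchinson_def)
  then consider a where "a \<in> C" "x = h 0 a" | a where "a \<in> C" "x = h 1 a"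
    by (auto simp: h_def fmap_def gmap_def algebra_simps)
  then obtain a s where as: "a \<in> C" "s = 0 \<or> s = 1" "x = h s a"
    by metis
  have "Re (a' * cnj (v * cnj (sgn z))) \<le> Re (a * cnj (v * cnj (sgn z)))" if "a' \<in> C" for a'
  proof -
    have "Re (h s a' * cnj v) \<le> Re (h s a * cnj v)"
      using xmax[OF hC[OF that as(2)]] as(3) by simp
    hence "Re (z * a' * cnj v) \<le> Re (z * a * cnj v)"
      by (simp add: h_def algebra_simps)
    hence "cmod z * Re (a' * cnj (v * cnj (sgn z))) \<le> cmod z * Re (a * cnj (v * cnj (sgn z)))"
      by (simp only: Re_mult_cnj_rotate)
    thus ?thesis
      using z by (metis mult_le_cancel_left_pos zero_less_norm_iff)
  qed
  hence "a \<in> support_face C (v * cnj (sgn z))"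
    using as(1) by (simp add: support_face_def)
  moreover have "s = 1" if "0 < Re ((1 - z) * cnj v)"
  proof -
    have "Re (h 1 a * cnj v) \<le> Re (h s a * cnj v)"
      using xmax[OF hC[OF as(1)]] as(3) by simp
    thus ?thesis
      using as(2) that by (auto simp: h_def algebra_simps)
  qed
  moreover have "s = 0" if "Re ((1 - z) * cnj v) < 0"
  proof -
    have "Re (h 0 a * cnj v) \<le> Re (h s a * cnj v)"
      using xmax[OF hC[OF as(1)]] as(3) by simp
    thus ?thesis
      using as(2) that by (auto simp: h_def algebra_simps)
  qed
  ultimately show ?thesis
    using that as(2,3) h_def by blast
qed

text \<open>Write \<open>x = z a + s (1 - z)\<close> and \<open>y = z b + t (1 - z)\<close> with \<open>a, b\<close> on the face for the
  rotated normal. The shift \<open>(s - t) (1 - z)\<close> contributes only when \<open>1 - z\<close> is parallel to the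
  face, since otherwise \<open>s = t\<close>.\<close>
lemma support_face_width_step:
  assumes C: "hutchinson z C = C" and z: "z \<noteq> 0" and v: "cmod v = 1"
    and xy: "x \<in> support_face C v" "y \<in> support_face C v"
  obtains a b where "a \<in> support_face C (v * cnj (sgn z))" "b \<in> support_face C (v * cnj (sgn z))"
    "Re ((x - y) * cnj (\<i> * v)) \<le> cmod z * Re ((a - b) * cnj (\<i> * (v * cnj (sgn z))))
       + cmod (1 - z) * of_bool (Re ((1 - z) * cnj v) = 0)"
proof -
  define c where "c = 1 - z"
  obtain a s where a: "a \<in> support_face C (v * cnj (sgn z))" "s = 0 \<or> s = 1"
    "x = z * a + of_real s * c" "0 < Re (c * cnj v) \<Longrightarrow> s = 1" "Re (c * cnj v) < 0 \<Longrightarrow> s = 0"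
    using support_face_hutchinson[OF C z xy(1)] unfolding c_def by metis
  obtain b t where b: "b \<in> support_face C (v * cnj (sgn z))" "t = 0 \<or> t = 1"
    "y = z * b + of_real t * c" "0 < Re (c * cnj v) \<Longrightarrow> t = 1" "Re (c * cnj v) < 0 \<Longrightarrow> t = 0"
    using support_face_hutchinson[OF C z xy(2)] unfolding c_def by metis
  have split: "Re ((x - y) * cnj (\<i> * v)) =
      cmod z * Re ((a - b) * cnj (\<i> * (v * cnj (sgn z)))) + (s - t) * Re (c * cnj (\<i> * v))"
    using Re_mult_cnj_rotate[of z "a - b" "\<i> * v"] a(3) b(3) by (simp add: algebra_simps)
  have "(s - t) * Re (c * cnj (\<i> * v)) \<le> cmod c * of_bool (Re (c * cnj v) = 0)"
  proof (cases "Re (c * cnj v) = 0")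
    case True
    have "(s - t) * Re (c * cnj (\<i> * v)) \<le> \<bar>s - t\<bar> * \<bar>Re (c * cnj (\<i> * v))\<bar>"
      by (metis abs_ge_self abs_mult)
    also have "\<dots> \<le> 1 * cmod c"
      using a(2) b(2) abs_Re_le_cmod[of "c * cnj (\<i> * v)"] v
      by (intro mult_mono) (auto simp: norm_mult)
    finally show ?thesis using True by simp
  next
    case False
    hence "s = t"
      using a(4,5) b(4,5) by (cases "Re (c * cnj v) > 0") auto
    thus ?thesis by simp
  qed
  hence "Re ((x - y) * cnj (\<i> * v)) \<le> cmod z * Re ((a - b) * cnj (\<i> * (v * cnj (sgn z))))
      + cmod c * of_bool (Re (c * cnj v) = 0)"
    unfolding split by linarith
  thus ?thesis
    using that a(1) b(1) unfolding c_def by blast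
qed

lemma support_face_width_le:
  fixes D :: real
  assumes C: "hutchinson z C = C" and z: "z \<noteq> 0"
    and D: "\<forall>x\<in>C. \<forall>y\<in>C. cmod (x - y) \<le> D"
  shows "cmod v = 1 \<Longrightarrow> x \<in> support_face C v \<Longrightarrow> y \<in> support_face C v \<Longrightarrow>
    Re ((x - y) * cnj (\<i> * v)) \<le>
      cmod (1 - z) * (\<Sum>k<N. cmod z ^ k * of_bool (Re ((1 - z) * sgn z ^ k * cnj v) = 0))
      + cmod z ^ N * D"
proof (induction N arbitrary: v x y)
  case 0
  have "Re ((x - y) * cnj (\<i> * v)) \<le> cmod ((x - y) * cnj (\<i> * v))"
    by (rule complex_Re_le_cmod)
  also have "\<dots> \<le> D"
    using 0 D by (auto simp: support_face_def norm_mult)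
  finally show ?case by simp
next
  case (Suc N)
  define c where "c = 1 - z"
  define v' where "v' = v * cnj (sgn z)"
  define ind :: "nat \<Rightarrow> real" where "ind k = of_bool (Re (c * sgn z ^ k * cnj v) = 0)" for k
  have v': "cmod v' = 1"
    using Suc.prems(1) z by (simp add: v'_def norm_mult norm_sgn)
  have ind0: "ind 0 = of_bool (Re (c * cnj v) = 0)"
    by (simp add: ind_def)
  obtain a b where ab: "a \<in> support_face C v'" "b \<in> support_face C v'"
    and step: "Re ((x - y) * cnj (\<i> * v)) \<le> cmod z * Re ((a - b) * cnj (\<i> * v')) + cmod c * ind 0"
    using support_face_width_step[OF C z Suc.prems] unfolding ind0 v'_def c_def by blast
  have rot: "c * sgn z ^ k * cnj v' = c * sgn z ^ Suc k * cnj v" for k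
    by (simp add: v'_def mult_ac)
  have IH: "Re ((a - b) * cnj (\<i> * v')) \<le>
      cmod c * (\<Sum>k<N. cmod z ^ k * ind (Suc k)) + cmod z ^ N * D"
    using Suc.IH[OF v' ab] unfolding c_def[symmetric] rot ind_def .
  have "Re ((x - y) * cnj (\<i> * v)) \<le>
      cmod z * (cmod c * (\<Sum>k<N. cmod z ^ k * ind (Suc k)) + cmod z ^ N * D) + cmod c * ind 0"
    using step IH by (smt (verit) mult_left_mono norm_ge_zero)
  also have "\<dots> = cmod c * (\<Sum>k<Suc N. cmod z ^ k * ind k) + cmod z ^ Suc N * D"
    unfolding sum.lessThan_Suc_shift by (simp add: sum_distrib_left algebra_simps)
  finally show ?case
    unfolding ind_def c_def .
qed

lemma support_face_elt_set_times:
  assumes "z \<noteq> 0"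
  shows "support_face (z *o C) u = z *o support_face C (u * cnj (sgn z))"
proof -
  have iff: "Re (z * b * cnj u) \<le> Re (z * a * cnj u) \<longleftrightarrow>
      Re (b * cnj (u * cnj (sgn z))) \<le> Re (a * cnj (u * cnj (sgn z)))" for a b
    by (simp only: Re_mult_cnj_rotate mult_le_cancel_left_pos zero_less_norm_iff assms not_False_eq_True)
  show ?thesis
    unfolding support_face_def elt_set_times_image iff[symmetric] by blast
qed

text \<open>Otherwise the midpoint of \<open>xm\<close> and \<open>c + ym\<close>, extreme points of the face of \<open>K\<close> and of its
  translate, would lie on the common supporting line of \<open>K \<union> (c + K)\<close> but on neither face.\<close>
lemma support_face_width_ge:
  fixes K :: "complex set"
  assumes K: "compact K" "K \<noteq> {}" and c: "c \<noteq> 0" and cvx: "convex (K \<union> c +o K)"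
  obtains x y where "x \<in> support_face K (- \<i> * sgn c)" "y \<in> support_face K (- \<i> * sgn c)"
    "cmod c \<le> Re ((x - y) * cnj (sgn c))"
proof -
  define e where "e = sgn c"
  define n where "n = - \<i> * e"
  have ce: "Re (c * cnj e) = cmod c" and cn: "Re (c * cnj n) = 0"
    using mult_cnj_sgn[of c] by (simp_all add: e_def n_def)
  have cont: "continuous_on S (\<lambda>x. Re (x * cnj u))" for S u
    by (intro continuous_intros)
  obtain x0 where x0: "x0 \<in> K" "\<And>y. y \<in> K \<Longrightarrow> Re (y * cnj n) \<le> Re (x0 * cnj n)"
    using continuous_attains_sup[OF K cont] by blast
  define M where "M = Re (x0 * cnj n)"
  define F where "F = support_face K n"
  have F: "F = K \<inter> {x. M \<le> Re (x * cnj n)}"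
    using x0 unfolding F_def support_face_def M_def by (auto intro: order_trans)
  have FI: "x \<in> F" if "x \<in> K" "Re (x * cnj n) = M" for x
    using that F by simp
  have FM: "Re (x * cnj n) = M" if "x \<in> F" for x
    using that x0 unfolding F_def support_face_def M_def by (auto intro: antisym)
  have "compact F"
    unfolding F by (intro compact_Int_closed K closed_Collect_le continuous_intros)
  moreover have "F \<noteq> {}"
    using x0 unfolding F M_def by auto
  ultimately obtain xm ym where xm: "xm \<in> F" "\<And>y. y \<in> F \<Longrightarrow> Re (y * cnj e) \<le> Re (xm * cnj e)"
    and ym: "ym \<in> F" "\<And>y. y \<in> F \<Longrightarrow> Re (ym * cnj e) \<le> Re (y * cnj e)"
    using continuous_attains_sup[OF _ _ cont] continuous_attains_inf[OF _ _ cont] by metis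
  have "cmod c \<le> Re ((xm - ym) * cnj e)"
  proof (rule ccontr)
    assume short: "\<not> cmod c \<le> Re ((xm - ym) * cnj e)"
    define p where "p = (1/2) *\<^sub>R xm + (1/2) *\<^sub>R (c + ym)"
    have "xm \<in> K" "ym \<in> K"
      using xm(1) ym(1) F by auto
    hence "p \<in> K \<union> c +o K"
      unfolding p_def by (intro convexD[OF cvx]) (auto simp: elt_set_plus_image)
    moreover have pn: "Re (p * cnj n) = M"
      using FM[OF xm(1)] FM[OF ym(1)] cn by (simp add: p_def scaleR_conv_of_real algebra_simps)
    moreover have pe: "Re (p * cnj e) = (Re (xm * cnj e) + Re (ym * cnj e) + cmod c) / 2"
      using ce by (simp add: p_def scaleR_conv_of_real algebra_simps) (simp add: field_simps)
    ultimately consider "p \<in> F" | k where "k \<in> F" "p = c + k"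
      using FI cn by (fastforce simp: elt_set_plus_image algebra_simps)
    thus False
    proof cases
      case 1
      thus False
        using xm(2)[OF 1] pe short by (simp add: algebra_simps)
    next
      case 2
      have "Re (p * cnj e) = Re (k * cnj e) + cmod c"
        using 2(2) ce by (simp add: algebra_simps)
      thus False
        using ym(2)[OF 2(1)] pe short by (simp add: algebra_simps)
    qed
  qed
  thus ?thesis
    using that xm(1) ym(1) unfolding F_def n_def e_def by blast
qed

lemma convex_self_similar_bound:
  assumes z: "z \<noteq> 0" "cmod z < 1"
    and C: "compact C" "convex C" "C \<noteq> {}" "hutchinson z C = C"
  obtains D where
    "\<And>N. 1 \<le> (\<Sum>k<N. cmod z ^ Suc k * of_bool (sgn z ^ Suc k \<in> \<real>)) + cmod z ^ Suc N * D"
proof -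
  define c where "c = 1 - z"
  have c0: "c \<noteq> 0"
    using z by (auto simp: c_def)
  define K where "K = z *o C"
  have KC: "K \<union> c +o K = C"
    using C(4) by (simp add: K_def c_def hutchinson_eq)
  have K: "compact K" "K \<noteq> {}"
    using C(1,3) unfolding K_def elt_set_times_image
    by (auto intro: compact_continuous_image continuous_intros)
  define v where "v = - \<i> * sgn c * cnj (sgn z)"
  obtain x y where xy: "x \<in> support_face K (- \<i> * sgn c)" "y \<in> support_face K (- \<i> * sgn c)"
    "cmod c \<le> Re ((x - y) * cnj (sgn c))"
    using support_face_width_ge[OF K c0] KC C(2) by metis
  then obtain a b where ab: "a \<in> support_face C v" "b \<in> support_face C v" "x = z * a" "y = z * b"
    using support_face_elt_set_times[OF z(1)] unfolding K_def v_def elt_set_times_image by blast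
  have iv: "sgn c * cnj (sgn z) = \<i> * v"
    by (simp add: v_def mult.assoc)
  have width: "cmod c \<le> cmod z * Re ((a - b) * cnj (\<i> * v))"
    using xy(3) unfolding ab(3,4) right_diff_distrib[symmetric] Re_mult_cnj_rotate iv .
  have v1: "cmod v = 1"
    using c0 z by (simp add: v_def norm_mult norm_sgn)
  obtain B where B: "\<forall>x\<in>C. norm x \<le> B"
    using compact_imp_bounded[OF C(1)] bounded_iff by blast
  have D: "\<forall>x\<in>C. \<forall>y\<in>C. cmod (x - y) \<le> 2 * B"
    using B norm_triangle_ineq4 by (smt (verit))
  have ind: "Re (c * sgn z ^ k * cnj v) = 0 \<longleftrightarrow> sgn z ^ Suc k \<in> \<real>" for k
  proof -
    have "cnj v = \<i> * cnj (sgn c) * sgn z"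
      by (simp add: v_def)
    hence "c * sgn z ^ k * cnj v = \<i> * of_real (cmod c) * sgn z ^ Suc k"
      by (simp add: mult_ac flip: mult_cnj_sgn)
    moreover have Re_i: "Re (\<i> * of_real t * w) = - t * Im w" for t w
      by simp
    ultimately have "Re (c * sgn z ^ k * cnj v) = - cmod c * Im (sgn z ^ Suc k)"
      by (simp only: Re_i)
    thus ?thesis
      using c0 by (metis complex_is_Real_iff mult_eq_0_iff neg_equal_0_iff_equal norm_eq_zero)
  qed
  define g :: "nat \<Rightarrow> real" where "g k = of_bool (sgn z ^ Suc k \<in> \<real>)" for k
  show ?thesis
  proof (rule that)
    fix N
    have "cmod c \<le> cmod z * (cmod c * (\<Sum>k<N. cmod z ^ k * g k) + cmod z ^ N * (2 * B))"
      using width support_face_width_le[OF C(4) z(1) D v1 ab(1,2), of N]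
      unfolding c_def[symmetric] ind g_def[symmetric] by (meson order_trans mult_left_mono norm_ge_zero)
    also have "\<dots> = cmod c * ((\<Sum>k<N. cmod z ^ Suc k * g k) + cmod z ^ Suc N * (2 * B / cmod c))"
      using c0 by (simp add: sum_distrib_left algebra_simps)
    finally have "1 \<le> (\<Sum>k<N. cmod z ^ Suc k * g k) + cmod z ^ Suc N * (2 * B / cmod c)"
      using c0 by (simp add: mult_le_cancel_left1)
    thus "1 \<le> (\<Sum>k<N. cmod z ^ Suc k * of_bool (sgn z ^ Suc k \<in> \<real>))
        + cmod z ^ Suc N * (2 * B / cmod c)"
      unfolding g_def .
  qed
qed

section \<open>Real powers of \<open>sgn z\<close>\<close>

lemma le_if_le_add_geometric:
  fixes r A B D :: real
  assumes "0 \<le> r" "r < 1" "\<And>N. B \<le> A + r ^ N * D"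
  shows "B \<le> A"
proof -
  have "(\<lambda>N. A + r ^ N * D) \<longlonglongrightarrow> A + 0 * D"
    using assms(1,2) by (intro tendsto_intros LIMSEQ_power_zero) simp
  thus ?thesis
    using assms(3) by (intro LIMSEQ_le_const) auto
qed

lemma power_in_Reals_iff_dvd:
  fixes w :: complex
  assumes w: "w \<noteq> 0" and q: "0 < q" "w ^ q \<in> \<real>"
    and least: "\<And>j. 0 < j \<Longrightarrow> j < q \<Longrightarrow> w ^ j \<notin> \<real>"
  shows "w ^ j \<in> \<real> \<longleftrightarrow> q dvd j"
proof
  assume "w ^ j \<in> \<real>"
  have "w ^ j = w ^ (q * (j div q) + j mod q)"
    by (simp only: mult_div_mod_eq)
  also have "\<dots> = (w ^ q) ^ (j div q) * w ^ (j mod q)"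
    by (simp only: power_add power_mult)
  finally have "w ^ j = (w ^ q) ^ (j div q) * w ^ (j mod q)" .
  hence "w ^ (j mod q) = w ^ j / (w ^ q) ^ (j div q)"
    using w by (simp add: field_simps)
  hence "w ^ (j mod q) \<in> \<real>"
    using \<open>w ^ j \<in> \<real>\<close> q(2) by simp
  hence "j mod q = 0"
    using least[of "j mod q"] q(1) by (meson mod_less_divisor neq0_conv)
  thus "q dvd j"
    by (simp add: dvd_eq_mod_eq_0)
next
  assume "q dvd j"
  then obtain m where "j = q * m" ..
  thus "w ^ j \<in> \<real>"
    using q(2) by (simp add: power_mult)
qed

lemma sum_dvd_geometric:
  fixes r :: real
  assumes "0 < q"
  shows "(1 - r ^ q) * (\<Sum>k<N. r ^ Suc k * of_bool (q dvd Suc k)) = r ^ q - r ^ (q * Suc (N div q))"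
proof (induction N)
  case (Suc N)
  show ?case
  proof (cases "q dvd Suc N")
    case True
    define d where "d = N div q"
    have d: "Suc N div q = Suc d"
      using True by (simp add: div_Suc d_def dvd_eq_mod_eq_0)
    hence N: "Suc N = q * Suc d"
      using True by (metis dvd_mult_div_cancel)
    have "(1 - r ^ q) * (\<Sum>k<Suc N. r ^ Suc k * of_bool (q dvd Suc k))
        = (1 - r ^ q) * (\<Sum>k<N. r ^ Suc k * of_bool (q dvd Suc k)) + (1 - r ^ q) * r ^ Suc N"
      using True by (simp add: algebra_simps)
    also have "\<dots> = r ^ q - r ^ (q * Suc d) + (1 - r ^ q) * r ^ (q * Suc d)"
      unfolding Suc.IH N by (simp add: d_def)
    also have "\<dots> = r ^ q - r ^ (q * Suc (Suc N div q))"
      by (simp add: d algebra_simps power_add)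
    finally show ?thesis .
  next
    case False
    thus ?thesis
      using Suc.IH by (simp add: div_Suc dvd_eq_mod_eq_0)
  qed
qed simp

lemma power_real_if_geometric_bound:
  fixes w :: complex and r D :: real
  assumes r: "0 < r" "r < 1" and w: "w \<noteq> 0"
    and bound: "\<And>N. 1 \<le> (\<Sum>k<N. r ^ Suc k * of_bool (w ^ Suc k \<in> \<real>)) + r ^ Suc N * D"
  obtains q where "0 < q" "w ^ q \<in> \<real>" "1/2 \<le> r ^ q"
proof (cases "\<exists>j>0. w ^ j \<in> \<real>")
  case False
  hence "w ^ Suc k \<notin> \<real>" for k
    by blast
  hence zero: "(\<Sum>k<N. r ^ Suc k * of_bool (w ^ Suc k \<in> \<real>)) = 0" for N
    by simp
  have pow: "r ^ Suc N * D = r ^ N * (r * D)" for N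
    by (simp add: mult_ac)
  have "1 \<le> 0 + r ^ N * (r * D)" for N
    using bound[of N] zero[of N] pow[of N] by linarith
  hence "1 \<le> (0::real)"
    by (rule le_if_le_add_geometric[of r 1 0 "r * D", rotated 2]) (use r in auto)
  thus ?thesis by simp
next
  case True
  define q where "q = (LEAST j. 0 < j \<and> w ^ j \<in> \<real>)"
  have q: "0 < q" "w ^ q \<in> \<real>"
    unfolding q_def using LeastI_ex[OF True] by auto
  have least: "w ^ j \<notin> \<real>" if "0 < j" "j < q" for j
    using that not_less_Least unfolding q_def by blast
  have rq: "0 < r ^ q" "r ^ q < 1"
    using r q(1) by (simp_all add: power_less_one_iff)
  have "(\<Sum>k<N. r ^ Suc k * of_bool (w ^ Suc k \<in> \<real>)) \<le> r ^ q / (1 - r ^ q)" for N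
  proof -
    have "(1 - r ^ q) * (\<Sum>k<N. r ^ Suc k * of_bool (q dvd Suc k)) \<le> r ^ q"
      unfolding sum_dvd_geometric[OF q(1)] using r by simp
    moreover have "(\<Sum>k<N. r ^ Suc k * of_bool (w ^ Suc k \<in> \<real>)) =
        (\<Sum>k<N. r ^ Suc k * of_bool (q dvd Suc k))"
      by (intro sum.cong refl) (simp only: power_in_Reals_iff_dvd[OF w q least])
    ultimately show ?thesis
      using rq by (simp add: le_divide_eq mult.commute)
  qed
  moreover have "r ^ Suc N * D = r ^ N * (r * D)" for N
    by (simp add: mult_ac)
  ultimately have "1 \<le> r ^ q / (1 - r ^ q) + r ^ N * (r * D)" for N
    using bound[of N] by (smt (verit))
  hence "1 \<le> r ^ q / (1 - r ^ q)"
    by (rule le_if_le_add_geometric[of r 1 _ "r * D", rotated 2]) (use r in auto)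
  hence "1/2 \<le> r ^ q"
    using rq by (simp add: le_divide_eq)
  thus ?thesis
    using that q by blast
qed

lemma power_real_if_convex_self_similar:
  assumes z: "z \<noteq> 0" "cmod z < 1"
    and C: "compact C" "convex C" "C \<noteq> {}" "hutchinson z C = C"
  shows "\<exists>n>0. z ^ n \<in> \<real> \<and> 1/2 \<le> cmod z ^ n"
proof -
  obtain D where D:
    "\<And>N. 1 \<le> (\<Sum>k<N. cmod z ^ Suc k * of_bool (sgn z ^ Suc k \<in> \<real>)) + cmod z ^ Suc N * D"
    using convex_self_similar_bound[OF z C] by blast
  have "0 < cmod z" "sgn z \<noteq> 0"
    using z by (auto simp: sgn_zero_iff)
  then obtain n where n: "0 < n" "sgn z ^ n \<in> \<real>" "1/2 \<le> cmod z ^ n"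
    using power_real_if_geometric_bound[OF _ z(2) _ D] by blast
  have "z ^ n = of_real (cmod z ^ n) * sgn z ^ n"
    using z by (simp add: sgn_eq power_divide)
  thus ?thesis
    using n by auto
qed


section \<open>Rational angles\<close>

definition polygon_parameter :: "complex \<Rightarrow> bool" where
  "polygon_parameter z \<longleftrightarrow>
     (\<exists>(p::int) (q::int) (r::real). q > 0 \<and> coprime p q \<and> r \<ge> 2 powr (- 1 / real_of_int q) \<and>
        z = complex_of_real r * exp (complex_of_real pi * \<i> * of_int p / of_int q))"

lemma two_powr_neg_inverse_le_iff:
  fixes r :: real
  assumes "0 \<le> r" "0 < n"
  shows "2 powr (- 1 / real n) \<le> r \<longleftrightarrow> 1/2 \<le> r ^ n"
proof -
  have "2 powr (- 1 / real n) = root n (1/2)"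
    using assms by (simp add: root_powr_inverse powr_divide powr_minus_divide)
  thus ?thesis
    using assms by (metis real_root_le_iff real_root_power_cancel)
qed

lemma exp_rational_angle:
  "exp (complex_of_real pi * \<i> * of_int p / of_int q) = cis (pi * of_int p / of_int q)"
  by (simp add: cis_conv_exp mult_ac)

lemma Im_rcis_power: "Im (rcis r a ^ n) = r ^ n * sin (real n * a)"
  by (simp add: DeMoivre2)

lemma power_real_if_polygon_parameter:
  assumes "polygon_parameter z"
  shows "\<exists>n>0. z ^ n \<in> \<real> \<and> 1/2 \<le> cmod z ^ n"
proof -
  obtain p q :: int and r where q: "q > 0" and r: "2 powr (- 1 / real_of_int q) \<le> r"
    and zr: "z = rcis r (pi * p / q)"
    using assms unfolding polygon_parameter_def exp_rational_angle rcis_def by blast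
  define n where "n = nat q"
  have n: "n > 0" "real n = q"
    using q by (simp_all add: n_def)
  have "0 < 2 powr (- 1 / real_of_int q)"
    by simp
  hence r0: "0 < r"
    using r by linarith
  have "real n * (pi * p / q) = of_int p * pi"
    using n q by simp
  hence "z ^ n \<in> \<real>"
    by (simp add: zr Im_rcis_power complex_is_Real_iff sin_zero_iff_int2)
  moreover have "cmod z = r"
    using r0 by (simp add: zr)
  ultimately show ?thesis
    using n r r0 two_powr_neg_inverse_le_iff[of r n] by auto
qed

lemma reduced_fraction:
  fixes m :: int and n :: nat
  assumes "0 < n"
  obtains p q where "coprime p q" "0 < q" "q \<le> int n" "real_of_int m / real n = p / q"
proof -
  define g where "g = gcd m (int n)"
  obtain p q where pq: "m = p * g" "int n = q * g" "coprime p q"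
    using gcd_coprime_exists[of m "int n"] assms unfolding g_def by auto
  have g: "0 < g"
    using assms by (simp add: g_def)
  have "0 < q * g"
    using pq(2) assms by linarith
  hence q: "0 < q"
    using g by (simp add: zero_less_mult_iff)
  moreover have "q \<le> int n"
    using g q pq(2) by (simp add: mult_le_cancel_left1)
  moreover have "real_of_int m / real n = p / q"
    using pq(1,2) g by (metis of_int_mult of_int_of_nat_eq of_int_0_less_iff
        nonzero_mult_divide_mult_cancel_right less_irrefl)
  ultimately show ?thesis
    using that pq(3) by blast
qed

lemma polygon_parameter_if_power_real:
  assumes z: "z \<noteq> 0" "cmod z \<le> 1" and n: "0 < n" "z ^ n \<in> \<real>" "1/2 \<le> cmod z ^ n"
  shows "polygon_parameter z"
proof -
  define r where "r = cmod z"
  define \<theta> where "\<theta> = Arg z"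
  have zr: "z = rcis r \<theta>"
    by (simp add: r_def \<theta>_def rcis_cmod_Arg)
  have r0: "0 < r"
    using z by (simp add: r_def)
  have "sin (real n * \<theta>) = 0"
    using n(2) r0 by (simp add: zr Im_rcis_power complex_is_Real_iff)
  then obtain m :: int where m: "real n * \<theta> = m * pi"
    using sin_zero_iff_int2 by blast
  obtain p q where pq: "coprime p q" "0 < q" "q \<le> int n" "real_of_int m / real n = p / q"
    using reduced_fraction n(1) by metis
  have "\<theta> = real_of_int m / real n * pi"
    using m n(1) by (simp add: field_simps)
  hence \<theta>: "\<theta> = pi * p / q"
    using pq(4) by simp
  have "r ^ n \<le> r ^ nat q"
    using r0 z(2) pq(3) by (intro power_decreasing) (auto simp: r_def)
  hence "1/2 \<le> r ^ nat q"
    using n(3) by (simp add: r_def)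
  hence "2 powr (- 1 / real_of_int q) \<le> r"
    using two_powr_neg_inverse_le_iff[of r "nat q"] pq(2) r0 by simp
  thus "polygon_parameter z"
    unfolding polygon_parameter_def exp_rational_angle
    using pq zr \<theta> by (auto simp: rcis_def)
qed

theorem lemma7p2p3:
  fixes z :: complex
  assumes "z \<in> Mset"
  shows "(convex (filled (Lambda z)) \<longleftrightarrow>
           (\<exists>(p::int) (q::int) (r::real). q > 0 \<and> coprime p q \<and> r \<ge> 2 powr (- 1 / real_of_int q) \<and>
              z = complex_of_real r * exp (complex_of_real pi * \<i> * of_int p / of_int q)))
       \<and> (convex (filled (Lambda z)) \<longrightarrow>
           filled (Lambda z) = Lambda z \<and> polytope (Lambda z))"
proof -
  have z: "z \<noteq> 0" "cmod z < 1"
    using assms by (auto simp: Mset_def)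
  have polygon: "convex (Lambda z)" "polytope (Lambda z)" if "polygon_parameter z"
    using power_real_if_polygon_parameter[OF that] Lambda_polytope_if_power_real[OF z] by blast+
  have "convex (filled (Lambda z)) \<longleftrightarrow> polygon_parameter z"
  proof
    assume "convex (filled (Lambda z))"
    hence "hutchinson z (convex hull Lambda z) = convex hull Lambda z"
      by (rule hutchinson_convex_hull_Lambda[OF z])
    hence "\<exists>n>0. z ^ n \<in> \<real> \<and> 1/2 \<le> cmod z ^ n"
      using Lambda_attractor[OF z]
      by (intro power_real_if_convex_self_similar[OF z]) (auto simp: compact_convex_hull)
    thus "polygon_parameter z"
      using polygon_parameter_if_power_real z by auto
  next
    assume "polygon_parameter z"
    thus "convex (filled (Lambda z))"
      using polygon filled_convex by simp
  qed
  thus ?thesis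
    unfolding polygon_parameter_def[symmetric] using polygon filled_convex by auto
qed

end
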